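(* Let $G$ be a connected graph with girth at least $5$ and $G\neq C_6$, and let $\Delta$ be the maximum degree of $G$. Then $\chi_D(G)\le \Delta+1$.
   Context: A $k$-coloring of a graph $G$ is a map $\varphi:V(G)\to\{1,\dots,k\}$; it is proper if $\varphi(v)\ne\varphi(w)$ whenever $vw\in E(G)$. A coloring $\varphi$ is distinguishing if the only automorphism $f$ of $G$ with $\varphi(f(v))=\varphi(v)$ for all $v\in V(G)$ is the identity. The distinguishing chromatic number $\chi_D(G)$ is the smallest number of colors in a proper distinguishing coloring of $G$. The girth of a graph containing no cycle is taken to be infinite (so trees satisfy the girth hypothesis). $C_6$ is the cycle on $6$ vertices. *)

theory Defs
  imports Main
begin

definition simple_graph :: "'a set \<Rightarrow> ('a \<Rightarrow> 'a \<Rightarrow> bool) \<Rightarrow> bool" where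
  "simple_graph V E \<longleftrightarrow> finite V \<and>
     (\<forall>x y. E x y \<longrightarrow> x \<in> V \<and> y \<in> V \<and> x \<noteq> y \<and> E y x)"

definition connected_graph :: "'a set \<Rightarrow> ('a \<Rightarrow> 'a \<Rightarrow> bool) \<Rightarrow> bool" where
  "connected_graph V E \<longleftrightarrow> V \<noteq> {} \<and>
     (\<forall>x\<in>V. \<forall>y\<in>V. (x, y) \<in> {(u, v). E u v}\<^sup>*)"

definition has_cycle_of_length :: "'a set \<Rightarrow> ('a \<Rightarrow> 'a \<Rightarrow> bool) \<Rightarrow> nat \<Rightarrow> bool" where
  "has_cycle_of_length V E k \<longleftrightarrow> 3 \<le> k \<and>
     (\<exists>vs. length vs = k \<and> distinct vs \<and> set vs \<subseteq> V \<and>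
        (\<forall>i<k. E (vs ! i) (vs ! ((i + 1) mod k))))"

text \<open>Girth at least g (acyclic graphs have infinite girth, so they qualify).\<close>
definition girth_at_least :: "'a set \<Rightarrow> ('a \<Rightarrow> 'a \<Rightarrow> bool) \<Rightarrow> nat \<Rightarrow> bool" where
  "girth_at_least V E g \<longleftrightarrow> (\<forall>k<g. \<not> has_cycle_of_length V E k)"

definition iso_to_cycle :: "'a set \<Rightarrow> ('a \<Rightarrow> 'a \<Rightarrow> bool) \<Rightarrow> nat \<Rightarrow> bool" where
  "iso_to_cycle V E n \<longleftrightarrow>
     (\<exists>f. bij_betw f {0..<n} V \<and>
        (\<forall>i<n. \<forall>j<n. E (f i) (f j) \<longleftrightarrow> (j = (i + 1) mod n \<or> i = (j + 1) mod n)))"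

definition degree :: "'a set \<Rightarrow> ('a \<Rightarrow> 'a \<Rightarrow> bool) \<Rightarrow> 'a \<Rightarrow> nat" where
  "degree V E v = card {w\<in>V. E v w}"

definition max_degree :: "'a set \<Rightarrow> ('a \<Rightarrow> 'a \<Rightarrow> bool) \<Rightarrow> nat" where
  "max_degree V E = Max (degree V E ` V)"

definition automorphism :: "'a set \<Rightarrow> ('a \<Rightarrow> 'a \<Rightarrow> bool) \<Rightarrow> ('a \<Rightarrow> 'a) \<Rightarrow> bool" where
  "automorphism V E f \<longleftrightarrow> bij_betw f V V \<and> (\<forall>x\<in>V. \<forall>y\<in>V. E x y \<longleftrightarrow> E (f x) (f y))"

definition is_k_coloring :: "'a set \<Rightarrow> nat \<Rightarrow> ('a \<Rightarrow> nat) \<Rightarrow> bool" where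
  "is_k_coloring V k \<phi> \<longleftrightarrow> (\<forall>v\<in>V. \<phi> v \<in> {1..k})"

definition proper_coloring :: "'a set \<Rightarrow> ('a \<Rightarrow> 'a \<Rightarrow> bool) \<Rightarrow> ('a \<Rightarrow> nat) \<Rightarrow> bool" where
  "proper_coloring V E \<phi> \<longleftrightarrow> (\<forall>v\<in>V. \<forall>w\<in>V. E v w \<longrightarrow> \<phi> v \<noteq> \<phi> w)"

definition distinguishing_coloring :: "'a set \<Rightarrow> ('a \<Rightarrow> 'a \<Rightarrow> bool) \<Rightarrow> ('a \<Rightarrow> nat) \<Rightarrow> bool" where
  "distinguishing_coloring V E \<phi> \<longleftrightarrow>
     (\<forall>f. automorphism V E f \<and> (\<forall>v\<in>V. \<phi> (f v) = \<phi> v) \<longrightarrow> (\<forall>v\<in>V. f v = v))"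

definition distinguishing_chromatic_number :: "'a set \<Rightarrow> ('a \<Rightarrow> 'a \<Rightarrow> bool) \<Rightarrow> nat" where
  "distinguishing_chromatic_number V E =
     (LEAST k. \<exists>\<phi>. is_k_coloring V k \<phi> \<and> proper_coloring V E \<phi> \<and> distinguishing_coloring V E \<phi>)"

end

theory Submission
  imports Defs
begin

text \<open>Colours are taken from \<open>{0..D}\<close>, where \<open>D\<close> is the maximum degree, and shifted by one at the
  end. Colour \<open>0\<close> is special: outside a set of roots, a vertex of colour \<open>0\<close> has all its
  neighbours coloured and sees all the colours \<open>1..D\<close> on them. Starting from a small seed whose
  colouring pins down every seed vertex, the colouring of a connected graph is extended greedily: a
  vertex with two coloured neighbours gets a colour missing among them (or \<open>0\<close> if none is
  missing), and otherwise the uncoloured neighbours of a coloured vertex \<open>p\<close> get pairwise distinct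
  colours different from that of \<open>p\<close>. Girth at least five keeps both steps proper and makes every
  new vertex fixed by each colour-preserving automorphism: no two vertices have two common
  neighbours, and a neighbour of a fixed vertex with a colour unique in that neighbourhood is fixed.
  The roots are fixed because they see at most \<open>D - 1\<close> colours.

  The seed is the closed neighbourhood of a vertex of degree less than \<open>D\<close> (or of the centre of a
  star); in a \<open>D\<close>-regular graph with \<open>D \<ge> 3\<close> it is the union of the neighbourhoods of two roots
  at distance two whose neighbourhoods carry different colour sets; in a cycle it is a path of six
  vertices, which only fails for \<open>C\<^sub>6\<close>.\<close>

lemma colour_missing_or_all_used:
  fixes \<phi> :: "'a \<Rightarrow> nat"
  assumes "finite N" "card N \<le> D" "X \<subseteq> N"
  obtains c where "c \<in> {1..D}" "c \<notin> \<phi> ` X" | "X = N" "{1..D} \<subseteq> \<phi> ` N"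
proof (cases "{1..D} \<subseteq> \<phi> ` X")
  case True
  have "D \<le> card (\<phi> ` X)" using card_mono[OF _ True] assms by (simp add: finite_subset)
  also have "\<dots> \<le> card X" using card_image_le assms finite_subset by blast
  finally have "X = N" using assms card_subset_eq card_mono by (metis le_antisym le_trans)
  then show ?thesis using True that(2) by blast
qed (use that(1) in blast)

lemma exists_inj_on_avoiding:
  assumes "finite X" "finite K" "\<forall>x\<in>X. finite (F x) \<and> card (F x) \<le> 1" "card X + 1 \<le> card K"
  shows "\<exists>h. inj_on h X \<and> (\<forall>x\<in>X. h x \<in> K \<and> h x \<notin> F x)"
  using assms
proof (induction X rule: finite_induct)
  case (insert x X)
  then obtain h where h: "inj_on h X" "\<forall>y\<in>X. h y \<in> K \<and> h y \<notin> F y" by auto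
  have "card (h ` X \<union> F x) \<le> card (h ` X) + card (F x)" by (rule card_Un_le)
  also have "\<dots> \<le> card X + 1" using card_image_le[OF insert.hyps(1), of h] insert.prems(2) by fastforce
  also have "\<dots> < card K" using insert.hyps insert.prems(3) by simp
  moreover have "finite (h ` X \<union> F x)" using insert.hyps(1) insert.prems(2) by simp
  ultimately have "\<not> K \<subseteq> h ` X \<union> F x" using card_mono[of "h ` X \<union> F x" K] by linarith
  then obtain c where c: "c \<in> K" "c \<notin> h ` X" "c \<notin> F x" by blast
  have "inj_on (h(x := c)) (insert x X)" using h(1) c(2) insert.hyps(2) by (auto simp: inj_on_def)
  moreover have "\<forall>y\<in>insert x X. (h(x := c)) y \<in> K \<and> (h(x := c)) y \<notin> F y"
    using h(2) c insert.hyps(2) by auto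
  ultimately show ?case by blast
qed simp

lemma cyclic_pred_iff:
  fixes i j n :: nat
  assumes "i < n" "j < n"
  shows "j = (i + n - 1) mod n \<longleftrightarrow> i = (j + 1) mod n"
proof (cases "i = 0")
  case True
  then show ?thesis using assms by (cases "j + 1 = n") auto
next
  case False
  have "(i - 1 + n) mod n = i - 1" using assms(1) by simp
  moreover have "i + n - 1 = i - 1 + n" using False by simp
  ultimately have "(i + n - 1) mod n = i - 1" by argo
  then show ?thesis using assms False by (cases "j + 1 = n") auto
qed

locale girth5_graph =
  fixes V :: "'a set" and E :: "'a \<Rightarrow> 'a \<Rightarrow> bool"
  assumes simple: "simple_graph V E" and girth: "girth_at_least V E 5"
begin

abbreviation nbhd :: "'a \<Rightarrow> 'a set" where
  "nbhd v \<equiv> {u. E v u}"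

lemma finite_V: "finite V"
  using simple by (simp add: simple_graph_def)

lemma edge_in_V: "E x y \<Longrightarrow> x \<in> V \<and> y \<in> V"
  using simple by (simp add: simple_graph_def)

lemma edge_sym: "E x y \<Longrightarrow> E y x"
  using simple by (simp add: simple_graph_def)

lemma edge_irrefl: "E x y \<Longrightarrow> x \<noteq> y"
  using simple by (simp add: simple_graph_def)

lemma nbhd_subset_V: "nbhd v \<subseteq> V"
  using edge_in_V by blast

lemma finite_nbhd: "finite (nbhd v)"
  using finite_subset[OF nbhd_subset_V finite_V] .

lemma no_triangle: "E a b \<Longrightarrow> E b c \<Longrightarrow> E a c \<Longrightarrow> False"
proof -
  assume ab: "E a b" and bc: "E b c" and ac: "E a c"
  have "has_cycle_of_length V E 3"
    unfolding has_cycle_of_length_def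
  proof (intro conjI exI[of _ "[a, b, c]"] allI impI)
    fix i :: nat assume "i < 3"
    then have "i = 0 \<or> i = 1 \<or> i = 2" by auto
    then show "E ([a, b, c] ! i) ([a, b, c] ! ((i + 1) mod 3))"
      using ab bc ac edge_sym by auto
  qed (use ab bc ac edge_irrefl edge_in_V in auto)
  then show False using girth by (auto simp: girth_at_least_def)
qed

lemma common_nbrs_unique:
  assumes "E x p" "E x q" "E y p" "E y q" "p \<noteq> q"
  shows "x = y"
proof (rule ccontr)
  assume "x \<noteq> y"
  have "has_cycle_of_length V E 4"
    unfolding has_cycle_of_length_def
  proof (intro conjI exI[of _ "[x, p, y, q]"] allI impI)
    fix i :: nat assume "i < 4"
    then have "i = 0 \<or> i = 1 \<or> i = 2 \<or> i = 3" by auto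
    then show "E ([x, p, y, q] ! i) ([x, p, y, q] ! ((i + 1) mod 4))"
      using assms edge_sym by auto
  next
    show "distinct [x, p, y, q]" using assms \<open>x \<noteq> y\<close> edge_irrefl by auto
  qed (use assms edge_in_V in auto)
  then show False using girth by (auto simp: girth_at_least_def)
qed

lemma degree_eq_card_nbhd: "degree V E v = card (nbhd v)"
proof -
  have "{w\<in>V. E v w} = nbhd v" using edge_in_V by blast
  then show ?thesis unfolding degree_def by simp
qed

lemma card_nbhd_le_max_degree: "v \<in> V \<Longrightarrow> card (nbhd v) \<le> max_degree V E"
  unfolding max_degree_def degree_eq_card_nbhd[symmetric]
  using finite_V by (intro Max_ge) auto

inductive_set forced_fixed :: "('a \<Rightarrow> nat) \<Rightarrow> 'a set" for \<phi> where
  unique_profile: "v \<in> V \<Longrightarrow>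
    (\<And>w. w \<in> V \<Longrightarrow> w \<noteq> v \<Longrightarrow> \<phi> w = \<phi> v \<Longrightarrow> \<phi> ` nbhd w = \<phi> ` nbhd v \<Longrightarrow> w \<in> forced_fixed \<phi>)
    \<Longrightarrow> v \<in> forced_fixed \<phi>"
| two_fixed_nbrs: "v \<in> V \<Longrightarrow> p \<in> forced_fixed \<phi> \<Longrightarrow> q \<in> forced_fixed \<phi> \<Longrightarrow> p \<noteq> q \<Longrightarrow>
    E v p \<Longrightarrow> E v q \<Longrightarrow> v \<in> forced_fixed \<phi>"
| unique_colour_at_fixed_nbr: "v \<in> V \<Longrightarrow> p \<in> forced_fixed \<phi> \<Longrightarrow> E p v \<Longrightarrow>
    (\<And>x. E p x \<Longrightarrow> x \<noteq> v \<Longrightarrow> \<phi> x = \<phi> v \<Longrightarrow> x \<in> forced_fixed \<phi>) \<Longrightarrow> v \<in> forced_fixed \<phi>"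

lemma automorphism_nbhd:
  assumes f: "automorphism V E f" and v: "v \<in> V"
  shows "nbhd (f v) = f ` nbhd v"
proof
  have adj: "x \<in> V \<Longrightarrow> y \<in> V \<Longrightarrow> E x y \<longleftrightarrow> E (f x) (f y)" for x y
    using f by (auto simp: automorphism_def)
  show "f ` nbhd v \<subseteq> nbhd (f v)" using adj edge_in_V by blast
  show "nbhd (f v) \<subseteq> f ` nbhd v"
  proof
    fix y assume "y \<in> nbhd (f v)"
    then have "y \<in> V" "E (f v) y" using edge_in_V by auto
    moreover obtain u where "u \<in> V" "y = f u"
      using \<open>y \<in> V\<close> f unfolding automorphism_def by (metis bij_betw_imp_surj_on imageE)
    ultimately show "y \<in> f ` nbhd v" using adj[OF v] by blast
  qed
qed

lemma forced_fixed_sound: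
  assumes f: "automorphism V E f" and \<phi>: "\<forall>v\<in>V. \<phi> (f v) = \<phi> v"
    and "v \<in> forced_fixed \<phi>"
  shows "f v = v"
proof -
  have bij: "bij_betw f V V" using f by (simp add: automorphism_def)
  have edge: "E x y \<Longrightarrow> E (f x) (f y)" for x y
    using f edge_in_V unfolding automorphism_def by blast
  text \<open>A moved vertex could only be sent to a vertex that is itself fixed, contradicting
    injectivity.\<close>
  have fixed_if_image_fixed: "f v = v" if v: "v \<in> V" and "f v \<noteq> v \<Longrightarrow> f (f v) = f v" for v
  proof (rule ccontr)
    assume "f v \<noteq> v"
    then have "f (f v) = f v" using that by blast
    moreover have "f v \<in> V" using bij_betwE[OF bij] v by blast
    ultimately show False
      using \<open>f v \<noteq> v\<close> v bij by (auto simp: bij_betw_def dest: inj_onD)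
  qed
  show ?thesis
    using \<open>v \<in> forced_fixed \<phi>\<close>
  proof (induction rule: forced_fixed.induct)
    case (unique_profile v)
    have "\<phi> ` nbhd (f v) = (\<phi> \<circ> f) ` nbhd v"
      by (simp add: automorphism_nbhd[OF f unique_profile.hyps(1)] image_comp)
    also have "\<dots> = \<phi> ` nbhd v"
      using \<phi> nbhd_subset_V by (intro image_cong) auto
    finally have "\<phi> ` nbhd (f v) = \<phi> ` nbhd v" .
    moreover have "f v \<in> V" using bij_betwE[OF bij] unique_profile.hyps(1) by blast
    ultimately have "f v \<noteq> v \<Longrightarrow> f (f v) = f v"
      using unique_profile.IH \<phi> unique_profile.hyps(1) by simp
    then show ?case using fixed_if_image_fixed unique_profile.hyps(1) by blast
  next
    case (two_fixed_nbrs v p q)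
    then have "E (f v) p" "E (f v) q" using edge by metis+
    then show ?case using common_nbrs_unique[of "f v" p q v] two_fixed_nbrs.hyps by blast
  next
    case (unique_colour_at_fixed_nbr v p)
    then have "E p (f v)" using edge by metis
    moreover have "\<phi> (f v) = \<phi> v" using \<phi> unique_colour_at_fixed_nbr.hyps(1) by blast
    ultimately have "f v \<noteq> v \<Longrightarrow> f (f v) = f v"
      using unique_colour_at_fixed_nbr.IH by simp
    then show ?case using fixed_if_image_fixed unique_colour_at_fixed_nbr.hyps(1) by blast
  qed
qed

lemma distinguishing_chromatic_number_le:
  assumes "\<forall>v\<in>V. \<phi> v \<le> D" "\<forall>v\<in>V. \<forall>w\<in>V. E v w \<longrightarrow> \<phi> v \<noteq> \<phi> w"
    and "V \<subseteq> forced_fixed \<phi>"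
  shows "distinguishing_chromatic_number V E \<le> D + 1"
proof -
  have "is_k_coloring V (D + 1) (Suc \<circ> \<phi>)"
    using assms(1) by (auto simp: is_k_coloring_def)
  moreover have "proper_coloring V E (Suc \<circ> \<phi>)"
    using assms(2) by (auto simp: proper_coloring_def)
  moreover have "distinguishing_coloring V E (Suc \<circ> \<phi>)"
    unfolding distinguishing_coloring_def
  proof (intro allI impI ballI)
    fix f v assume "automorphism V E f \<and> (\<forall>v\<in>V. (Suc \<circ> \<phi>) (f v) = (Suc \<circ> \<phi>) v)" "v \<in> V"
    then show "f v = v" using forced_fixed_sound[of f \<phi> v] assms(3) by auto
  qed
  ultimately show ?thesis
    unfolding distinguishing_chromatic_number_def by (intro Least_le) blast
qed

lemma nbhd_forced_fixed:
  assumes "p \<in> forced_fixed \<psi>" "F \<subseteq> forced_fixed \<psi>" "inj_on \<psi> (nbhd p - F)"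
  shows "nbhd p \<subseteq> forced_fixed \<psi>"
proof
  fix v assume v: "v \<in> nbhd p"
  show "v \<in> forced_fixed \<psi>"
  proof (cases "v \<in> F")
    case False
    show ?thesis
    proof (rule forced_fixed.unique_colour_at_fixed_nbr[OF _ assms(1)])
      show "v \<in> V" "E p v" using v nbhd_subset_V by auto
      fix x assume "E p x" "x \<noteq> v" "\<psi> x = \<psi> v"
      then show "x \<in> forced_fixed \<psi>" using assms(2,3) v False by (auto dest: inj_onD)
    qed
  qed (use assms(2) in blast)
qed

text \<open>The second condition is only needed to pin down the seed of a cycle.\<close>
definition admissible :: "nat \<Rightarrow> 'a set \<Rightarrow> 'a set \<Rightarrow> ('a \<Rightarrow> nat) \<Rightarrow> bool" where
  "admissible D R I \<psi> \<longleftrightarrow>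
     (\<forall>v\<in>V - R. \<psi> v = 0 \<longrightarrow> {1..D} \<subseteq> \<psi> ` nbhd v) \<and>
     (\<forall>v\<in>V - I. \<psi> v \<noteq> 0 \<longrightarrow> (\<exists>u. E v u \<and> \<psi> u \<noteq> 0))"

text \<open>The final colouring is not known yet, so the part \<open>C\<close> must be fixed by every admissible
  extension of the current colouring.\<close>
definition pinned :: "nat \<Rightarrow> 'a set \<Rightarrow> 'a set \<Rightarrow> 'a set \<Rightarrow> ('a \<Rightarrow> nat) \<Rightarrow> bool" where
  "pinned D R I C \<phi> \<longleftrightarrow>
     (\<forall>\<psi>. (\<forall>v\<in>C. \<psi> v = \<phi> v) \<and> admissible D R I \<psi> \<longrightarrow> C \<subseteq> forced_fixed \<psi>)"

lemma admissible_zero: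
  "admissible D R I \<psi> \<Longrightarrow> v \<in> V \<Longrightarrow> v \<notin> R \<Longrightarrow> \<psi> v = 0 \<Longrightarrow> {1..D} \<subseteq> \<psi> ` nbhd v"
  unfolding admissible_def by simp

lemma admissible_nonzero:
  "admissible D R I \<psi> \<Longrightarrow> v \<in> V \<Longrightarrow> v \<notin> I \<Longrightarrow> \<psi> v \<noteq> 0 \<Longrightarrow> \<exists>u. E v u \<and> \<psi> u \<noteq> 0"
  unfolding admissible_def by simp

lemma not_all_colours_if_not_inj:
  assumes "card (nbhd v) \<le> D" "\<not> inj_on \<psi> (nbhd v)"
  shows "\<not> {1..D} \<subseteq> \<psi> ` nbhd v"
proof
  assume "{1..D} \<subseteq> \<psi> ` nbhd v"
  then have "D \<le> card (\<psi> ` nbhd v)" using card_mono[OF finite_imageI[OF finite_nbhd]] by fastforce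
  moreover have "card (\<psi> ` nbhd v) < card (nbhd v)"
    using assms(2) card_image_le[OF finite_nbhd] inj_on_iff_eq_card[OF finite_nbhd] le_neq_implies_less
    by blast
  ultimately show False using assms(1) by linarith
qed

lemma forced_fixed_deficient_root:
  assumes "admissible D R I \<psi>" "v \<in> V" "\<psi> v = 0" "\<not> {1..D} \<subseteq> \<psi> ` nbhd v"
    and "\<And>u. u \<in> R \<Longrightarrow> u \<noteq> v \<Longrightarrow> \<psi> ` nbhd u \<noteq> \<psi> ` nbhd v"
  shows "v \<in> forced_fixed \<psi>"
proof (rule forced_fixed.unique_profile[OF assms(2)])
  fix u assume u: "u \<in> V" "u \<noteq> v" "\<psi> u = \<psi> v" "\<psi> ` nbhd u = \<psi> ` nbhd v"
  then have "u \<notin> R" using assms(5) by blast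
  then show "u \<in> forced_fixed \<psi>" using admissible_zero[OF assms(1) u(1)] u(3,4) assms(3,4) by simp
qed

lemma pinned_insert:
  assumes "pinned D R I C \<phi>" "\<forall>v\<in>C. \<phi>' v = \<phi> v"
    and "u \<in> V" "p \<in> C" "q \<in> C" "p \<noteq> q" "E u p" "E u q"
  shows "pinned D R I (insert u C) \<phi>'"
  unfolding pinned_def
proof (intro allI impI)
  fix \<psi> assume \<psi>: "(\<forall>v\<in>insert u C. \<psi> v = \<phi>' v) \<and> admissible D R I \<psi>"
  then have "C \<subseteq> forced_fixed \<psi>" using assms(1,2) by (auto simp: pinned_def)
  moreover have "u \<in> forced_fixed \<psi>"
    using forced_fixed.two_fixed_nbrs assms(3-8) calculation by blast
  ultimately show "insert u C \<subseteq> forced_fixed \<psi>" by blast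
qed

lemma pinned_union_nbhd:
  assumes "pinned D R I C \<phi>" "\<forall>v\<in>C. \<phi>' v = \<phi> v"
    and "p \<in> C" "inj_on \<phi>' (nbhd p - C)"
  shows "pinned D R I (C \<union> nbhd p) \<phi>'"
  unfolding pinned_def
proof (intro allI impI)
  fix \<psi> assume \<psi>: "(\<forall>v\<in>C \<union> nbhd p. \<psi> v = \<phi>' v) \<and> admissible D R I \<psi>"
  then have "C \<subseteq> forced_fixed \<psi>" using assms(1,2) by (auto simp: pinned_def)
  moreover have "inj_on \<psi> (nbhd p - C)" using assms(4) \<psi> inj_on_cong[of "nbhd p - C" \<psi> \<phi>'] by simp
  ultimately show "C \<union> nbhd p \<subseteq> forced_fixed \<psi>" using nbhd_forced_fixed[of p \<psi> C] assms(3) by blast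
qed

lemma connected_closed_subset:
  assumes "connected_graph V E" "r \<in> S" "r \<in> V" and closed: "\<And>x y. x \<in> S \<Longrightarrow> E x y \<Longrightarrow> y \<in> S"
  shows "V \<subseteq> S"
proof
  fix y assume "y \<in> V"
  then have "(r, y) \<in> {(u, v). E u v}\<^sup>*" using assms(1,3) by (simp add: connected_graph_def)
  then show "y \<in> S" by (induction rule: rtrancl_induct) (use assms(2) closed in auto)
qed

end

text \<open>The invariant of the greedy extension on the coloured part \<open>C\<close>; \<open>R\<close> is the set of roots and
  \<open>I\<close> the initial seed.\<close>
locale partial_colouring = girth5_graph +
  fixes D :: nat and R I C :: "'a set" and \<phi> :: "'a \<Rightarrow> nat"
  assumes coloured_in_V: "C \<subseteq> V"
    and coloured_nonempty: "C \<noteq> {}"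
    and colour_le: "v \<in> C \<Longrightarrow> \<phi> v \<le> D"
    and proper: "v \<in> C \<Longrightarrow> w \<in> C \<Longrightarrow> E v w \<Longrightarrow> \<phi> v \<noteq> \<phi> w"
    and zero_nbr_coloured: "v \<in> C \<Longrightarrow> \<phi> v = 0 \<Longrightarrow> E v u \<Longrightarrow> u \<in> C"
    and zero_sees_all: "v \<in> C \<Longrightarrow> v \<notin> R \<Longrightarrow> \<phi> v = 0 \<Longrightarrow> {1..D} \<subseteq> \<phi> ` nbhd v"
    and nonzero_has_nbr: "v \<in> C \<Longrightarrow> \<phi> v \<noteq> 0 \<Longrightarrow> \<exists>u\<in>C. E v u"
    and nonzero_has_nonzero_nbr: "v \<in> C \<Longrightarrow> v \<notin> I \<Longrightarrow> \<phi> v \<noteq> 0 \<Longrightarrow> \<exists>u\<in>C. E v u \<and> \<phi> u \<noteq> 0"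

lemma (in girth5_graph) partial_colouringI:
  assumes "C \<subseteq> V" "C \<noteq> {}" "\<And>v. v \<in> C \<Longrightarrow> \<phi> v \<le> D"
    and "\<And>v w. v \<in> C \<Longrightarrow> w \<in> C \<Longrightarrow> E v w \<Longrightarrow> \<phi> v \<noteq> \<phi> w"
    and "\<And>v u. v \<in> C \<Longrightarrow> \<phi> v = 0 \<Longrightarrow> E v u \<Longrightarrow> u \<in> C"
    and "\<And>v. v \<in> C \<Longrightarrow> v \<notin> R \<Longrightarrow> \<phi> v = 0 \<Longrightarrow> {1..D} \<subseteq> \<phi> ` nbhd v"
    and "\<And>v. v \<in> C \<Longrightarrow> \<phi> v \<noteq> 0 \<Longrightarrow> \<exists>u\<in>C. E v u"
    and "\<And>v. v \<in> C \<Longrightarrow> v \<notin> I \<Longrightarrow> \<phi> v \<noteq> 0 \<Longrightarrow> \<exists>u\<in>C. E v u \<and> \<phi> u \<noteq> 0"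
  shows "partial_colouring V E D R I C \<phi>"
  using assms girth5_graph_axioms by (simp add: partial_colouring_def partial_colouring_axioms_def)

context partial_colouring
begin

lemma nbr_of_uncoloured_nonzero: "u \<notin> C \<Longrightarrow> x \<in> C \<Longrightarrow> E u x \<Longrightarrow> \<phi> x \<noteq> 0"
  using zero_nbr_coloured edge_sym by blast

lemma admissible_if_total: "C = V \<Longrightarrow> admissible D R I \<phi>"
  using zero_sees_all nonzero_has_nonzero_nbr unfolding admissible_def by blast

lemma insert_vertex:
  assumes u: "u \<in> V" "u \<notin> C" and p: "p \<in> C" "E u p"
    and c: "c \<le> D" "c \<notin> \<phi> ` (C \<inter> nbhd u)"
    and c0: "c = 0 \<Longrightarrow> nbhd u \<subseteq> C \<and> {1..D} \<subseteq> \<phi> ` nbhd u"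
  shows "partial_colouring V E D R I (insert u C) (\<phi>(u := c))"
proof (rule partial_colouringI)
  have uC: "x \<in> C \<Longrightarrow> x \<noteq> u" for x using u by blast
  have c_new: "x \<in> C \<Longrightarrow> E u x \<Longrightarrow> c \<noteq> \<phi> x" for x using c(2) by blast
  have u_nbhd: "u \<notin> nbhd u" using edge_irrefl by blast
  show "insert u C \<subseteq> V" "insert u C \<noteq> {}" using coloured_in_V u by auto
  show "(\<phi>(u := c)) v \<le> D" if "v \<in> insert u C" for v using that colour_le c by auto
  show "(\<phi>(u := c)) v \<noteq> (\<phi>(u := c)) w" if "v \<in> insert u C" "w \<in> insert u C" "E v w" for v w
    using that proper c_new edge_sym edge_irrefl uC by fastforce
  show "x \<in> insert u C" if "v \<in> insert u C" "(\<phi>(u := c)) v = 0" "E v x" for v x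
    using that c0 zero_nbr_coloured uC by (cases "v = u") auto
  show "{1..D} \<subseteq> (\<phi>(u := c)) ` nbhd v" if "v \<in> insert u C" "v \<notin> R" "(\<phi>(u := c)) v = 0" for v
  proof (cases "v = u")
    case True
    have "(\<phi>(u := c)) ` nbhd u = \<phi> ` nbhd u" using u_nbhd by (intro image_cong) auto
    then show ?thesis using that c0 True by simp
  next
    case False
    then have "u \<notin> nbhd v" using that zero_nbr_coloured u(2) by auto
    then have "(\<phi>(u := c)) ` nbhd v = \<phi> ` nbhd v" by (intro image_cong) auto
    then show ?thesis using that False zero_sees_all by simp
  qed
  show "\<exists>x\<in>insert u C. E v x" if "v \<in> insert u C" "(\<phi>(u := c)) v \<noteq> 0" for v
    using that p nonzero_has_nbr uC by (cases "v = u") auto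
  show "\<exists>x\<in>insert u C. E v x \<and> (\<phi>(u := c)) x \<noteq> 0"
    if "v \<in> insert u C" "v \<notin> I" "(\<phi>(u := c)) v \<noteq> 0" for v
  proof (cases "v = u")
    case True
    then show ?thesis using p nbr_of_uncoloured_nonzero[OF u(2) p] uC by auto
  next
    case False
    then show ?thesis using that nonzero_has_nonzero_nbr uC by fastforce
  qed
qed

lemma union_nbhd:
  assumes p: "p \<in> C" "\<phi> p \<noteq> 0"
    and single: "\<And>x y. x \<in> nbhd p - C \<Longrightarrow> y \<in> C \<Longrightarrow> E x y \<Longrightarrow> y = p"
    and agree: "\<And>v. v \<in> C \<Longrightarrow> \<phi>' v = \<phi> v"
    and new: "\<And>x. x \<in> nbhd p - C \<Longrightarrow> \<phi>' x \<in> {1..D} - {\<phi> p}"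
  shows "partial_colouring V E D R I (C \<union> nbhd p) \<phi>'"
proof (rule partial_colouringI)
  have new_nonzero: "x \<in> nbhd p - C \<Longrightarrow> \<phi>' x \<noteq> 0" for x using new by fastforce
  show "C \<union> nbhd p \<subseteq> V" "C \<union> nbhd p \<noteq> {}" using coloured_in_V nbhd_subset_V p by auto
  show "\<phi>' v \<le> D" if "v \<in> C \<union> nbhd p" for v
    using that colour_le agree new by (cases "v \<in> C") auto
  show "\<phi>' v \<noteq> \<phi>' w" if "v \<in> C \<union> nbhd p" "w \<in> C \<union> nbhd p" "E v w" for v w
  proof -
    have "\<phi>' x \<noteq> \<phi>' y" if "x \<in> nbhd p - C" "y \<in> C" "E x y" for x y
      using single[OF that] new[OF that(1)] agree[OF that(2)] by auto
    moreover have "\<not> (v \<in> nbhd p \<and> w \<in> nbhd p)" using no_triangle[of p v w] \<open>E v w\<close> by blast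
    ultimately show ?thesis using that proper agree edge_sym by (metis Diff_iff Un_iff)
  qed
  show "u \<in> C \<union> nbhd p" if "v \<in> C \<union> nbhd p" "\<phi>' v = 0" "E v u" for v u
    using that new_nonzero agree zero_nbr_coloured by (cases "v \<in> C") auto
  show "{1..D} \<subseteq> \<phi>' ` nbhd v" if "v \<in> C \<union> nbhd p" "v \<notin> R" "\<phi>' v = 0" for v
  proof -
    have "v \<in> C" "\<phi> v = 0" using that new_nonzero agree by (cases "v \<in> C"; auto)+
    moreover have "\<phi>' ` nbhd v = \<phi> ` nbhd v"
      using zero_nbr_coloured[OF calculation] agree by (intro image_cong) auto
    ultimately show ?thesis using zero_sees_all that(2) by simp
  qed
  show "\<exists>u\<in>C \<union> nbhd p. E v u" if "v \<in> C \<union> nbhd p" "\<phi>' v \<noteq> 0" for v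
  proof (cases "v \<in> C")
    case True
    then show ?thesis using that nonzero_has_nbr agree by fastforce
  next
    case False
    then show ?thesis using that p edge_sym by blast
  qed
  show "\<exists>u\<in>C \<union> nbhd p. E v u \<and> \<phi>' u \<noteq> 0" if "v \<in> C \<union> nbhd p" "v \<notin> I" "\<phi>' v \<noteq> 0" for v
  proof (cases "v \<in> C")
    case True
    then show ?thesis using that nonzero_has_nonzero_nbr agree by fastforce
  next
    case False
    then have "E v p" "\<phi>' p \<noteq> 0" using that p agree edge_sym by auto
    then show ?thesis using p(1) by blast
  qed
qed

lemma grow_by_vertex:
  assumes deg: "card (nbhd u) \<le> D" and pin: "pinned D R I C \<phi>"
    and u: "u \<in> V" "u \<notin> C" and pq: "p \<in> C" "q \<in> C" "p \<noteq> q" "E u p" "E u q"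
  shows "\<exists>\<phi>'. partial_colouring V E D R I (insert u C) \<phi>' \<and> pinned D R I (insert u C) \<phi>'"
proof -
  obtain c where c: "c \<le> D" "c \<notin> \<phi> ` (C \<inter> nbhd u)"
    and c0: "c = 0 \<Longrightarrow> nbhd u \<subseteq> C \<and> {1..D} \<subseteq> \<phi> ` nbhd u"
  proof (rule colour_missing_or_all_used[OF finite_nbhd deg, of "C \<inter> nbhd u" \<phi>])
    show "C \<inter> nbhd u \<subseteq> nbhd u" by blast
    show "\<And>c. c \<in> {1..D} \<Longrightarrow> c \<notin> \<phi> ` (C \<inter> nbhd u) \<Longrightarrow> thesis" using that by auto
    assume "C \<inter> nbhd u = nbhd u" "{1..D} \<subseteq> \<phi> ` nbhd u"
    moreover have "0 \<notin> \<phi> ` (C \<inter> nbhd u)"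
    proof
      assume "0 \<in> \<phi> ` (C \<inter> nbhd u)"
      then obtain x where "x \<in> C" "E u x" "\<phi> x = 0" by auto
      then show False using nbr_of_uncoloured_nonzero[OF u(2)] by blast
    qed
    ultimately show thesis using that[of 0] by auto
  qed
  have "partial_colouring V E D R I (insert u C) (\<phi>(u := c))"
    using insert_vertex[OF u pq(1,4) c c0] .
  moreover have "pinned D R I (insert u C) (\<phi>(u := c))"
    using pinned_insert[OF pin _ u(1) pq] u(2) by auto
  ultimately show ?thesis by blast
qed

lemma grow_by_nbhd:
  assumes deg: "card (nbhd p) \<le> D" and pin: "pinned D R I C \<phi>"
    and p: "p \<in> C" "u \<notin> C" "E p u"
    and single: "\<And>x y. x \<in> nbhd p - C \<Longrightarrow> y \<in> C \<Longrightarrow> E x y \<Longrightarrow> y = p"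
  shows "\<exists>\<phi>'. partial_colouring V E D R I (C \<union> nbhd p) \<phi>' \<and> pinned D R I (C \<union> nbhd p) \<phi>'"
proof -
  have p0: "\<phi> p \<noteq> 0" using zero_nbr_coloured p by blast
  then obtain q where q: "q \<in> C" "E p q" using nonzero_has_nbr p(1) by blast
  have "card (nbhd p - C) \<le> card (nbhd p - {q})"
    using q by (intro card_mono) (auto simp: finite_nbhd)
  also have "\<dots> \<le> card ({1..D} - {\<phi> p})"
    using q deg colour_le[OF p(1)] p0 finite_nbhd by (simp add: card_Diff_singleton)
  finally obtain g where g: "inj_on g (nbhd p - C)" "g ` (nbhd p - C) \<subseteq> {1..D} - {\<phi> p}"
    using card_le_inj[of "nbhd p - C"] finite_nbhd by (metis finite_Diff finite_atLeastAtMost)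
  define \<phi>' where "\<phi>' v = (if v \<in> C then \<phi> v else g v)" for v
  have "inj_on \<phi>' (nbhd p - C)" using g(1) by (simp add: \<phi>'_def inj_on_def)
  then have "pinned D R I (C \<union> nbhd p) \<phi>'" using pinned_union_nbhd pin p(1) by (simp add: \<phi>'_def)
  moreover have "partial_colouring V E D R I (C \<union> nbhd p) \<phi>'"
  proof (rule union_nbhd[OF p(1) p0 single])
    show "\<And>v. v \<in> C \<Longrightarrow> \<phi>' v = \<phi> v" by (simp add: \<phi>'_def)
    show "\<And>x. x \<in> nbhd p - C \<Longrightarrow> \<phi>' x \<in> {1..D} - {\<phi> p}" using g(2) by (auto simp: \<phi>'_def)
  qed
  ultimately show ?thesis by blast
qed

end

context girth5_graph
begin

lemma extend_to_all_vertices: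
  assumes conn: "connected_graph V E" and deg: "\<forall>v\<in>V. card (nbhd v) \<le> D"
    and "partial_colouring V E D R I C \<phi>" "pinned D R I C \<phi>"
  shows "\<exists>\<phi>'. partial_colouring V E D R I V \<phi>' \<and> pinned D R I V \<phi>'"
  using assms(3,4)
proof (induction "card (V - C)" arbitrary: C \<phi> rule: less_induct)
  case less
  interpret partial_colouring V E D R I C \<phi> by (rule less.prems(1))
  have shrink: "\<exists>\<phi>'. partial_colouring V E D R I V \<phi>' \<and> pinned D R I V \<phi>'"
    if "C \<subset> C'" "C' \<subseteq> V" "partial_colouring V E D R I C' \<phi>'" "pinned D R I C' \<phi>'" for C' \<phi>'
  proof -
    have "card (V - C') < card (V - C)"
      using that coloured_in_V finite_V by (intro psubset_card_mono) auto
    then show ?thesis using less.hyps that(3,4) by blast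
  qed
  show ?case
  proof (cases "C = V")
    case True
    then show ?thesis using less.prems by blast
  next
    case False
    obtain p u where pu: "p \<in> C" "u \<notin> C" "E p u"
      using connected_closed_subset[OF conn] coloured_in_V coloured_nonempty False by blast
    show ?thesis
    proof (cases "\<exists>u' p' q'. u' \<in> V \<and> u' \<notin> C \<and> p' \<in> C \<and> q' \<in> C \<and> p' \<noteq> q' \<and>
        E u' p' \<and> E u' q'")
      case True
      then obtain u' p' q' where u': "u' \<in> V" "u' \<notin> C"
        and pq: "p' \<in> C" "q' \<in> C" "p' \<noteq> q'" "E u' p'" "E u' q'"
        by blast
      then show ?thesis
        using grow_by_vertex[OF _ less.prems(2) u' pq] deg shrink[of "insert u' C"] coloured_in_V by blast
    next
      case False
      then have "\<And>x y. x \<in> nbhd p - C \<Longrightarrow> y \<in> C \<Longrightarrow> E x y \<Longrightarrow> y = p"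
        using pu(1) edge_in_V edge_sym by blast
      then show ?thesis
        using grow_by_nbhd[OF _ less.prems(2) pu] deg pu shrink[of "C \<union> nbhd p"] coloured_in_V
          nbhd_subset_V edge_in_V by blast
    qed
  qed
qed

lemma distinguishing_chromatic_number_le_if_seed:
  assumes "connected_graph V E" "\<forall>v\<in>V. card (nbhd v) \<le> D"
    and "partial_colouring V E D R I C \<phi>" "pinned D R I C \<phi>"
  shows "distinguishing_chromatic_number V E \<le> D + 1"
proof -
  obtain \<phi>' where "partial_colouring V E D R I V \<phi>'" "pinned D R I V \<phi>'"
    using extend_to_all_vertices assms by blast
  then interpret partial_colouring V E D R I V \<phi>' by simp
  have "V \<subseteq> forced_fixed \<phi>'"
    using \<open>pinned D R I V \<phi>'\<close> admissible_if_total by (auto simp: pinned_def)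
  then show ?thesis using distinguishing_chromatic_number_le colour_le proper by blast
qed

lemma star_partial_colouring:
  assumes "r \<in> V" "\<phi> r = 0" "\<And>x. E r x \<Longrightarrow> \<phi> x \<in> {1..D}"
  shows "partial_colouring V E D {r} (insert r (nbhd r)) (insert r (nbhd r)) \<phi>"
proof (rule partial_colouringI)
  let ?C = "insert r (nbhd r)"
  show "?C \<subseteq> V" "?C \<noteq> {}" using assms(1) nbhd_subset_V by auto
  show "\<phi> v \<le> D" if "v \<in> ?C" for v using that assms(2,3) by fastforce
  show "\<phi> v \<noteq> \<phi> w" if "v \<in> ?C" "w \<in> ?C" "E v w" for v w
    using that assms(2,3) no_triangle[of r v w] edge_irrefl by fastforce
  show "u \<in> ?C" if "v \<in> ?C" "\<phi> v = 0" "E v u" for v u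
    using that assms(3) by fastforce
  show "{1..D} \<subseteq> \<phi> ` nbhd v" if "v \<in> ?C" "v \<notin> {r}" "\<phi> v = 0" for v
    using that assms(3) by fastforce
  show "\<exists>u\<in>?C. E v u" if "v \<in> ?C" "\<phi> v \<noteq> 0" for v
    using that assms(2) edge_sym by blast
qed blast

lemma star_pinned:
  assumes r: "r \<in> V" "\<phi> r = 0" "\<And>x. E r x \<Longrightarrow> \<phi> x \<noteq> 0" "inj_on \<phi> (nbhd r)"
    and small: "card (nbhd r) < D \<or> V \<subseteq> insert r (nbhd r)"
  shows "pinned D {r} (insert r (nbhd r)) (insert r (nbhd r)) \<phi>"
  unfolding pinned_def
proof (intro allI impI)
  let ?C = "insert r (nbhd r)"
  fix \<psi> assume \<psi>: "(\<forall>v\<in>?C. \<psi> v = \<phi> v) \<and> admissible D {r} ?C \<psi>"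
  have "r \<in> forced_fixed \<psi>"
  proof (rule forced_fixed.unique_profile[OF r(1)])
    fix w assume w: "w \<in> V" "w \<noteq> r" "\<psi> w = \<psi> r" "\<psi> ` nbhd w = \<psi> ` nbhd r"
    have "\<psi> w = 0" using w(3) \<psi> r(2) by simp
    then have "{1..D} \<subseteq> \<psi> ` nbhd w" using admissible_zero \<psi> w(1,2) by blast
    then have "{1..D} \<subseteq> \<psi> ` nbhd r" using w(4) by simp
    moreover have "card (\<psi> ` nbhd r) \<le> card (nbhd r)" using card_image_le finite_nbhd by blast
    ultimately have "w \<in> nbhd r"
      using small w card_mono[of "\<psi> ` nbhd r" "{1..D}"] by (auto simp: finite_nbhd)
    then show "w \<in> forced_fixed \<psi>" using \<psi> r(3) \<open>\<psi> w = 0\<close> by force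
  qed
  moreover have "inj_on \<psi> (nbhd r)" using r(4) \<psi> inj_on_cong[of "nbhd r" \<psi> \<phi>] by simp
  ultimately show "?C \<subseteq> forced_fixed \<psi>" using nbhd_forced_fixed[of r \<psi> "{}"] by simp
qed

lemma star_seed:
  assumes r: "r \<in> V" "card (nbhd r) \<le> D"
    and small: "card (nbhd r) < D \<or> V \<subseteq> insert r (nbhd r)"
  shows "\<exists>\<phi>. partial_colouring V E D {r} (insert r (nbhd r)) (insert r (nbhd r)) \<phi> \<and>
    pinned D {r} (insert r (nbhd r)) (insert r (nbhd r)) \<phi>"
proof -
  obtain g where g: "inj_on g (nbhd r)" "g ` nbhd r \<subseteq> {1..D}"
    using card_le_inj[OF finite_nbhd, of "{1..D}" r] r(2) by auto
  have r_nbhd: "r \<notin> nbhd r" using edge_irrefl by blast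
  then have "inj_on (g(r := 0)) (nbhd r) = inj_on g (nbhd r)" by (intro inj_on_cong) auto
  then have inj: "inj_on (g(r := 0)) (nbhd r)" using g(1) by simp
  have range: "(g(r := 0)) x \<in> {1..D}" if "E r x" for x using g(2) r_nbhd that by auto
  have "partial_colouring V E D {r} (insert r (nbhd r)) (insert r (nbhd r)) (g(r := 0))"
    by (rule star_partial_colouring[OF r(1) _ range]) simp
  moreover have "pinned D {r} (insert r (nbhd r)) (insert r (nbhd r)) (g(r := 0))"
    by (rule star_pinned[OF r(1) _ _ inj small]) (use range in force)+
  ultimately show ?thesis by blast
qed

lemma star_if_max_degree_le_1:
  assumes "connected_graph V E" "r \<in> V" "\<forall>v\<in>V. card (nbhd v) \<le> 1"
  shows "V \<subseteq> insert r (nbhd r)"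
proof (rule connected_closed_subset[OF assms(1) _ assms(2)])
  fix x y assume x: "x \<in> insert r (nbhd r)" and "E x y"
  show "y \<in> insert r (nbhd r)"
  proof (cases "x = r")
    case False
    then have "E x r" "x \<in> V" using x edge_sym edge_in_V by auto
    then have "y = r"
      using assms(3) \<open>E x y\<close> card_le_Suc0_iff_eq[OF finite_nbhd] by (metis One_nat_def mem_Collect_eq)
    then show ?thesis by blast
  qed (use \<open>E x y\<close> in blast)
qed blast

lemma nbhd_eq_pair:
  assumes "card (nbhd v) = 2" "E v a" "E v b" "a \<noteq> b"
  shows "nbhd v = {a, b}"
proof -
  have sub: "{a, b} \<subseteq> nbhd v" using assms by simp
  have "card {a, b} = card (nbhd v)" using assms by simp
  then show ?thesis using card_subset_eq[OF finite_nbhd sub] by simp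
qed

lemma other_nbr:
  assumes "card (nbhd v) = 2" "E v a"
  obtains b where "b \<noteq> a" "nbhd v = {a, b}"
proof -
  obtain x y where xy: "nbhd v = {x, y}" "x \<noteq> y" using assms(1) card_2_iff by metis
  then have "a = x \<or> a = y" using assms(2) by blast
  then show ?thesis using that xy by (metis insert_commute)
qed

lemma iso_to_cycle_if_nbhds:
  assumes "distinct xs" "set xs = V" "length xs = n"
    and nbhds: "\<And>i. i < n \<Longrightarrow> nbhd (xs ! i) = {xs ! ((i + 1) mod n), xs ! ((i + n - 1) mod n)}"
  shows "iso_to_cycle V E n"
  unfolding iso_to_cycle_def
proof (intro exI conjI allI impI)
  show "bij_betw ((!) xs) {0..<n} V"
    by (rule bij_betw_nth[OF assms(1)]) (simp_all add: assms(2,3) atLeast0LessThan)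
  fix i j assume ij: "i < n" "j < n"
  have "E (xs ! i) (xs ! j) \<longleftrightarrow> xs ! j = xs ! ((i + 1) mod n) \<or> xs ! j = xs ! ((i + n - 1) mod n)"
    using nbhds[OF ij(1)] by auto
  also have "\<dots> \<longleftrightarrow> j = (i + 1) mod n \<or> j = (i + n - 1) mod n"
    using nth_eq_iff_index_eq[OF assms(1)] ij assms(3) by simp
  also have "\<dots> \<longleftrightarrow> j = (i + 1) mod n \<or> i = (j + 1) mod n"
    using cyclic_pred_iff[OF ij] by blast
  finally show "E (xs ! i) (xs ! j) \<longleftrightarrow> (j = (i + 1) mod n \<or> i = (j + 1) mod n)" .
qed

end

text \<open>Six consecutive vertices \<open>t, s1, r, s2, w, w'\<close> of a \<open>2\<close>-regular graph; \<open>w' = t\<close> if the graph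
  is \<open>C\<^sub>5\<close>.\<close>
locale degree2_frame = girth5_graph +
  fixes r s1 s2 t w w' :: 'a
  assumes r_in_V: "r \<in> V"
    and nbhd_r: "nbhd r = {s1, s2}" and s1_ne_s2: "s1 \<noteq> s2"
    and nbhd_s1: "nbhd s1 = {r, t}" and t_ne_r: "t \<noteq> r"
    and nbhd_s2: "nbhd s2 = {r, w}" and w_ne_r: "w \<noteq> r"
    and nbhd_w: "nbhd w = {s2, w'}" and w'_ne_s2: "w' \<noteq> s2"
begin

lemma frame_adj:
  "E r y \<longleftrightarrow> y = s1 \<or> y = s2" "E y r \<longleftrightarrow> y = s1 \<or> y = s2"
  "E s1 y \<longleftrightarrow> y = r \<or> y = t" "E y s1 \<longleftrightarrow> y = r \<or> y = t"
  "E s2 y \<longleftrightarrow> y = r \<or> y = w" "E y s2 \<longleftrightarrow> y = r \<or> y = w"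
  "E w y \<longleftrightarrow> y = s2 \<or> y = w'" "E y w \<longleftrightarrow> y = s2 \<or> y = w'"
  using nbhd_r nbhd_s1 nbhd_s2 nbhd_w edge_sym unfolding set_eq_iff by (simp; metis)+

lemma frame_edges: "E r s1" "E r s2" "E s1 t" "E s2 w" "E w w'"
  using frame_adj by simp_all

lemma distinct_frame: "distinct [r, s1, s2, t, w]" "w' \<notin> {r, s1, s2, w}"
proof -
  have ne: "r \<noteq> s1" "r \<noteq> s2" "s1 \<noteq> t" "s2 \<noteq> w" "w \<noteq> w'"
    using frame_edges edge_irrefl by blast+
  have no_s1_s2: "\<not> E s1 s2" using no_triangle[of r s1 s2] frame_edges by blast
  then have "w \<noteq> s1" "t \<noteq> s2" using frame_edges edge_sym by blast+
  moreover have "t \<noteq> w" "w' \<noteq> s1"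
    using common_nbrs_unique[of w s1 s2 r] frame_edges edge_sym s1_ne_s2 w_ne_r by blast+
  moreover have "w' \<noteq> r" using frame_adj(2)[of w] frame_edges(5) calculation(1) ne(4) by blast
  ultimately show "distinct [r, s1, s2, t, w]" "w' \<notin> {r, s1, s2, w}"
    using ne s1_ne_s2 t_ne_r w_ne_r w'_ne_s2 by auto
qed

lemma frame_in_V: "{r, s1, s2, t, w, w'} \<subseteq> V"
  using r_in_V frame_edges edge_in_V by auto

lemma iso_to_C6_if_closed:
  assumes conn: "connected_graph V E" and deg2: "\<forall>v\<in>V. card (nbhd v) = 2"
    and "E t w'"
  shows "iso_to_cycle V E 6"
proof -
  define xs where "xs = [r, s1, t, w', w, s2]"
  have dist: "distinct xs" using distinct_frame \<open>E t w'\<close> edge_irrefl by (auto simp: xs_def)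
  have "nbhd t = {s1, w'}" "nbhd w' = {w, t}"
    using deg2 frame_in_V \<open>E t w'\<close> edge_sym[OF frame_edges(3)] edge_sym[OF frame_edges(5)]
      edge_sym[OF \<open>E t w'\<close>] dist
    by (intro nbhd_eq_pair; auto simp: xs_def)+
  then have nbhds: "nbhd r = {s1, s2}" "nbhd s1 = {t, r}" "nbhd t = {w', s1}" "nbhd w' = {w, t}"
    "nbhd w = {s2, w'}" "nbhd s2 = {r, w}"
    using nbhd_r nbhd_s1 nbhd_s2 nbhd_w by (simp_all add: insert_commute)
  have V: "V = set xs"
  proof
    show "set xs \<subseteq> V" using frame_in_V by (auto simp: xs_def)
    show "V \<subseteq> set xs"
    proof (rule connected_closed_subset[OF conn _ r_in_V])
      show "r \<in> set xs" by (simp add: xs_def)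
      fix x y assume "x \<in> set xs" "E x y"
      then have "y \<in> nbhd x" "x \<in> {r, s1, t, w', w, s2}" by (simp_all add: xs_def)
      then show "y \<in> set xs" unfolding xs_def using nbhds by auto
    qed
  qed
  show ?thesis
  proof (rule iso_to_cycle_if_nbhds[OF dist V[symmetric]])
    show "length xs = 6" by (simp add: xs_def)
    fix i :: nat assume "i < 6"
    then have "i \<in> {0, 1, 2, 3, 4, 5}" by auto
    then show "nbhd (xs ! i) = {xs ! ((i + 1) mod 6), xs ! ((i + 6 - 1) mod 6)}"
      by (elim insertE emptyE) (simp_all add: xs_def nbhds)
  qed
qed

definition path_colouring :: "'a \<Rightarrow> nat" where
  "path_colouring x = (if x \<in> {r, w} then 0 else if x \<in> {s1, s2} then 1 else 2)"

lemma path_colouring_values: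
  "path_colouring r = 0" "path_colouring w = 0" "path_colouring s1 = 1" "path_colouring s2 = 1"
  "path_colouring t = 2" "path_colouring w' = 2"
  using distinct_frame by (auto simp: path_colouring_def)

lemma path_partial_colouring:
  assumes "\<not> E t w'"
  shows "partial_colouring V E 2 {r} {r, s1, s2, t, w, w'} {r, s1, s2, t, w, w'} path_colouring"
proof (rule partial_colouringI)
  let ?C = "{r, s1, s2, t, w, w'}"
  note val = path_colouring_values
  show "?C \<subseteq> V" "?C \<noteq> {}" using frame_in_V by auto
  show "path_colouring v \<le> 2" for v by (simp add: path_colouring_def)
  show "path_colouring v \<noteq> path_colouring x" if "v \<in> ?C" "x \<in> ?C" "E v x" for v x
  proof -
    have "\<not> E r w" "\<not> E s1 s2" using frame_adj distinct_frame no_triangle[of r s1 s2] frame_edges by auto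
    then have "\<not> E r w" "\<not> E w r" "\<not> E s1 s2" "\<not> E s2 s1" "\<not> E t w'" "\<not> E w' t"
      using assms edge_sym by blast+
    moreover have "v \<noteq> x" using edge_irrefl \<open>E v x\<close> by blast
    ultimately show ?thesis using that by (auto simp: path_colouring_def)
  qed
  show "u \<in> ?C" if "v \<in> ?C" "path_colouring v = 0" "E v u" for v u
    using that val frame_adj by auto
  show "{1..2} \<subseteq> path_colouring ` nbhd v" if "v \<in> ?C" "v \<notin> {r}" "path_colouring v = 0" for v
  proof -
    have "v = w" using that val by auto
    then show ?thesis using nbhd_w val by auto
  qed
  show "\<exists>u\<in>?C. E v u" if "v \<in> ?C" "path_colouring v \<noteq> 0" for v
    using that frame_edges edge_sym by blast
qed blast

lemma path_pinned: "pinned 2 {r} {r, s1, s2, t, w, w'} {r, s1, s2, t, w, w'} path_colouring"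
  unfolding pinned_def
proof (intro allI impI)
  let ?C = "{r, s1, s2, t, w, w'}"
  fix \<psi> assume \<psi>: "(\<forall>v\<in>?C. \<psi> v = path_colouring v) \<and> admissible 2 {r} ?C \<psi>"
  then have adm: "admissible 2 {r} ?C \<psi>" by blast
  have val: "\<psi> r = 0" "\<psi> w = 0" "\<psi> s1 = 1" "\<psi> s2 = 1" "\<psi> t = 2" "\<psi> w' = 2"
    using \<psi> path_colouring_values by auto
  have "\<psi> ` nbhd r = {1}" using nbhd_r val by auto
  then have "\<not> {1..2} \<subseteq> \<psi> ` nbhd r" by (simp add: subset_iff Ball_def exI[of _ 2])
  then have r: "r \<in> forced_fixed \<psi>" by (rule forced_fixed_deficient_root[OF adm r_in_V val(1)]) simp
  text \<open>\<open>s2\<close> is the only vertex of colour \<open>1\<close> with only colour \<open>0\<close> around it.\<close>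
  have s2: "s2 \<in> forced_fixed \<psi>"
  proof (rule forced_fixed.unique_profile)
    show "s2 \<in> V" using frame_in_V by blast
    fix x assume x: "x \<in> V" "x \<noteq> s2" "\<psi> x = \<psi> s2" "\<psi> ` nbhd x = \<psi> ` nbhd s2"
    then have "\<psi> ` nbhd x = {0}" using nbhd_s2 val by auto
    moreover have "x \<noteq> s1" using x(4) nbhd_s1 nbhd_s2 val by auto
    then have "x \<notin> ?C" using x(2,3) val by auto
    then obtain u where "E x u" "\<psi> u \<noteq> 0" using admissible_nonzero[OF adm x(1)] x(3) val by auto
    moreover have "\<psi> u \<in> \<psi> ` nbhd x" using \<open>E x u\<close> by (intro imageI) simp
    ultimately show "x \<in> forced_fixed \<psi>" by simp
  qed
  have single: "inj_on \<psi> ({a, b} - {a})" "inj_on \<psi> ({a, b} - {b})" for a b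
    by (auto simp: inj_on_def)
  have s1: "s1 \<in> forced_fixed \<psi>" using nbhd_forced_fixed[OF r, of "{s2}"] s2 nbhd_r single by simp
  have w: "w \<in> forced_fixed \<psi>" using nbhd_forced_fixed[OF s2, of "{r}"] r nbhd_s2 single by simp
  have "w' \<in> forced_fixed \<psi>" using nbhd_forced_fixed[OF w, of "{s2}"] s2 nbhd_w single by simp
  moreover have "t \<in> forced_fixed \<psi>" using nbhd_forced_fixed[OF s1, of "{r}"] r nbhd_s1 single by simp
  ultimately show "?C \<subseteq> forced_fixed \<psi>" using r s1 s2 w by blast
qed

end

text \<open>The roots \<open>r\<close> and \<open>t\<close> of the seed have the single common neighbour \<open>s1\<close>; the neighbours
  \<open>s2\<close> of \<open>r\<close> and \<open>w\<close> of \<open>t\<close> will share the colour of \<open>s1\<close>, hence must not be adjacent.\<close>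
locale regular_frame = girth5_graph +
  fixes D :: nat and r s1 s2 t w :: 'a
  assumes regular: "v \<in> V \<Longrightarrow> card (nbhd v) = D" and three_le_D: "3 \<le> D"
    and r_in_V: "r \<in> V" and r_s1: "E r s1" and r_s2: "E r s2" and s1_ne_s2: "s1 \<noteq> s2"
    and s1_t: "E s1 t" and t_ne_r: "t \<noteq> r" and t_w: "E t w" and w_ne_s1: "w \<noteq> s1"
    and not_s2_w: "\<not> E s2 w"
begin

definition A :: "'a set" where "A = nbhd r - {s1, s2}"
definition B :: "'a set" where "B = nbhd t - {s1, w}"

lemma t_in_V: "t \<in> V"
  using s1_t edge_in_V by blast

lemma not_r_t: "\<not> E r t" "\<not> E t r"
  using no_triangle[of r s1 t] r_s1 s1_t edge_sym by blast+

lemma common_nbr_r_t: "E r x \<Longrightarrow> E t x \<Longrightarrow> x = s1"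
  using common_nbrs_unique[of x r t s1] r_s1 s1_t t_ne_r edge_sym by blast

lemma nbr_outside_frame: "\<not> E r w" "\<not> E t s2"
  using common_nbr_r_t t_w w_ne_s1 r_s2 s1_ne_s2 by blast+

lemma at_most_one_common_nbr: "v \<noteq> r \<Longrightarrow> E r x \<Longrightarrow> E r y \<Longrightarrow> E v x \<Longrightarrow> E v y \<Longrightarrow> x = y"
  using common_nbrs_unique[of x r v y] edge_sym by blast

lemma card_A: "card A = D - 2"
  unfolding A_def using regular[OF r_in_V] r_s1 r_s2 s1_ne_s2 finite_nbhd
  by (simp add: card_Diff_subset)

lemma card_B: "card B = D - 2"
  unfolding B_def using regular[OF t_in_V] s1_t t_w w_ne_s1 edge_sym finite_nbhd
  by (simp add: card_Diff_subset)

lemma A_B_disjoint: "A \<inter> B = {}"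
  unfolding A_def B_def using common_nbr_r_t by blast

lemma card_nbhd_inter_A:
  assumes "b \<in> B"
  shows "card (nbhd b \<inter> A) \<le> 1"
proof -
  have "b \<noteq> r" using assms not_r_t by (auto simp: B_def)
  then have "\<forall>x\<in>nbhd b \<inter> A. \<forall>y\<in>nbhd b \<inter> A. x = y"
    using at_most_one_common_nbr by (auto simp: A_def)
  then show ?thesis using card_le_Suc0_iff_eq[of "nbhd b \<inter> A"] finite_nbhd by simp
qed

lemma exists_regular_colours:
  obtains hA hB m where "inj_on hA A" "hA ` A \<subseteq> {2..D}" "inj_on hB B" "hB ` B \<subseteq> {2..D}"
    "m \<in> {2..D}" "m \<notin> hA ` A" "m \<in> hB ` B"
    "\<And>a b. a \<in> A \<Longrightarrow> b \<in> B \<Longrightarrow> E a b \<Longrightarrow> hA a \<noteq> hB b"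
proof -
  have fin: "finite A" "finite B" by (simp_all add: A_def B_def finite_nbhd)
  have "card A \<le> card {2..D}" using card_A by simp
  then obtain hA where hA: "inj_on hA A" "hA ` A \<subseteq> {2..D}"
    using card_le_inj[OF fin(1) finite_atLeastAtMost] by blast
  have "card (hA ` A) < card {2..D}" using card_image[OF hA(1)] card_A three_le_D by simp
  then have "\<not> {2..D} \<subseteq> hA ` A" using card_mono[OF finite_imageI[OF fin(1)]] by fastforce
  then obtain m where m: "m \<in> {2..D}" "m \<notin> hA ` A" by blast
  have "B \<noteq> {}" using card_B three_le_D by auto
  then obtain b0 where b0: "b0 \<in> B" by blast
  define F where "F b = hA ` (nbhd b \<inter> A)" for b
  have "card (B - {b0}) + 1 \<le> card ({2..D} - {m})"
    using card_B b0 m three_le_D fin by (simp add: card_Diff_singleton)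
  moreover have "finite (F b) \<and> card (F b) \<le> 1" if "b \<in> B" for b
    using card_image_le[of "nbhd b \<inter> A" hA] card_nbhd_inter_A[OF that] fin(1) by (simp add: F_def)
  ultimately obtain h where h: "inj_on h (B - {b0})" "\<forall>b\<in>B - {b0}. h b \<in> {2..D} - {m} \<and> h b \<notin> F b"
    using exists_inj_on_avoiding[of "B - {b0}" "{2..D} - {m}" F] fin by blast
  let ?hB = "h(b0 := m)"
  have "inj_on ?hB (B - {b0})" using h(1) by (simp add: inj_on_def)
  moreover have "m \<notin> ?hB ` (B - {b0})" using h(2) by auto
  ultimately have "inj_on ?hB B" using inj_on_insert[of ?hB b0 "B - {b0}"] insert_absorb[OF b0] by simp
  moreover have "?hB ` B \<subseteq> {2..D}" "m \<in> ?hB ` B" using h m b0 by auto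
  moreover have "hA a \<noteq> ?hB b" if "a \<in> A" "b \<in> B" "E a b" for a b
  proof (cases "b = b0")
    case False
    then have "hA a \<in> F b" using that edge_sym[OF that(3)] by (auto simp: F_def)
    then show ?thesis using h False that(2) by auto
  qed (use m that in auto)
  ultimately show ?thesis using that hA m by blast
qed

end

locale regular_colouring = regular_frame +
  fixes hA hB :: "'a \<Rightarrow> nat" and m :: nat
  assumes hA_inj: "inj_on hA A" and hA_range: "hA ` A \<subseteq> {2..D}"
    and hB_inj: "inj_on hB B" and hB_range: "hB ` B \<subseteq> {2..D}"
    and m_range: "m \<in> {2..D}" and m_notin_hA: "m \<notin> hA ` A" and m_in_hB: "m \<in> hB ` B"
    and hA_hB: "a \<in> A \<Longrightarrow> b \<in> B \<Longrightarrow> E a b \<Longrightarrow> hA a \<noteq> hB b"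
begin

definition seed_colouring :: "'a \<Rightarrow> nat" where
  "seed_colouring x =
     (if x \<in> {r, t} then 0 else if x \<in> {s1, s2, w} then 1 else if x \<in> A then hA x else hB x)"

lemma nbhd_r_eq: "nbhd r = {s1, s2} \<union> A" and nbhd_t_eq: "nbhd t = {s1, w} \<union> B"
  using r_s1 r_s2 s1_t t_w edge_sym[OF s1_t] by (auto simp: A_def B_def)

lemma outside_A_B: "{r, t, s1, s2, w} \<inter> (A \<union> B) = {}"
  using edge_irrefl not_r_t nbr_outside_frame by (auto simp: A_def B_def)

lemma seed_colouring_values:
  "seed_colouring r = 0" "seed_colouring t = 0"
  "seed_colouring s1 = 1" "seed_colouring s2 = 1" "seed_colouring w = 1"
  "x \<in> A \<Longrightarrow> seed_colouring x = hA x" "x \<in> B \<Longrightarrow> seed_colouring x = hB x"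
  using outside_A_B A_B_disjoint r_s1 r_s2 t_w edge_irrefl not_r_t nbr_outside_frame
  by (auto simp: seed_colouring_def)

lemma colours_A_B: "x \<in> A \<Longrightarrow> seed_colouring x \<in> {2..D}" "x \<in> B \<Longrightarrow> seed_colouring x \<in> {2..D}"
  using seed_colouring_values hA_range hB_range by auto

lemma seed_cases:
  "x \<in> {r, t} \<union> nbhd r \<union> nbhd t \<Longrightarrow> x = r \<or> x = t \<or> x = s1 \<or> x = s2 \<or> x = w \<or> x \<in> A \<or> x \<in> B"
  using nbhd_r_eq nbhd_t_eq by auto

lemma independent_classes:
  "\<not> E r t" "\<not> E t r" "\<not> E s1 s2" "\<not> E s2 s1" "\<not> E s1 w" "\<not> E w s1" "\<not> E s2 w" "\<not> E w s2"
  "a \<in> A \<Longrightarrow> a' \<in> A \<Longrightarrow> \<not> E a a'" "b \<in> B \<Longrightarrow> b' \<in> B \<Longrightarrow> \<not> E b b'"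
proof -
  show "\<not> E r t" "\<not> E t r" by (fact not_r_t)+
  show "\<not> E s1 s2" "\<not> E s2 s1" using no_triangle[of r s1 s2] r_s1 r_s2 edge_sym by blast+
  show "\<not> E s1 w" "\<not> E w s1" using no_triangle[of t s1 w] s1_t t_w edge_sym by blast+
  show "\<not> E s2 w" "\<not> E w s2" using not_s2_w edge_sym by blast+
  show "a \<in> A \<Longrightarrow> a' \<in> A \<Longrightarrow> \<not> E a a'" using no_triangle[of r a a'] by (auto simp: A_def)
  show "b \<in> B \<Longrightarrow> b' \<in> B \<Longrightarrow> \<not> E b b'" using no_triangle[of t b b'] by (auto simp: B_def)
qed

lemma seed_colour_classes:
  assumes "x \<in> {r, t} \<union> nbhd r \<union> nbhd t"
  shows "seed_colouring x = 0 \<Longrightarrow> x \<in> {r, t}" "seed_colouring x = 1 \<Longrightarrow> x \<in> {s1, s2, w}"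
    "2 \<le> seed_colouring x \<Longrightarrow> x \<in> A \<union> B"
  using seed_cases[OF assms] seed_colouring_values colours_A_B by fastforce+

lemma seed_partial_colouring:
  "partial_colouring V E D {r, t} ({r, t} \<union> nbhd r \<union> nbhd t) ({r, t} \<union> nbhd r \<union> nbhd t)
     seed_colouring"
proof (rule partial_colouringI)
  let ?C = "{r, t} \<union> nbhd r \<union> nbhd t"
  note val = seed_colouring_values and col = colours_A_B and cls = seed_colour_classes
  show "?C \<subseteq> V" "?C \<noteq> {}" using r_in_V t_in_V nbhd_subset_V by auto
  show "seed_colouring v \<le> D" if "v \<in> ?C" for v
    using seed_cases[OF that] val col three_le_D by auto
  show "seed_colouring v \<noteq> seed_colouring x" if "v \<in> ?C" "x \<in> ?C" "E v x" for v x
  proof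
    assume eq: "seed_colouring v = seed_colouring x"
    have "v \<noteq> x" using edge_irrefl \<open>E v x\<close> by blast
    consider "seed_colouring v = 0" | "seed_colouring v = 1" | "2 \<le> seed_colouring v" by linarith
    then show False
    proof cases
      case 1
      then show False using cls(1)[OF that(1)] cls(1)[OF that(2)] eq \<open>v \<noteq> x\<close> that(3) not_r_t by auto
    next
      case 2
      then show False
        using cls(2)[OF that(1)] cls(2)[OF that(2)] eq \<open>v \<noteq> x\<close> that(3) independent_classes by auto
    next
      case 3
      then have "v \<in> A \<union> B" "x \<in> A \<union> B" using cls(3) that eq by auto
      then show False
        using that(3) eq val independent_classes hA_hB[of v x] hA_hB[of x v] edge_sym[OF that(3)]
        by fastforce
    qed
  qed
  show "u \<in> ?C" if "v \<in> ?C" "seed_colouring v = 0" "E v u" for v u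
    using cls(1)[OF that(1,2)] that(3) by auto
  show "{1..D} \<subseteq> seed_colouring ` nbhd v" if "v \<in> ?C" "v \<notin> {r, t}" "seed_colouring v = 0" for v
    using cls(1)[OF that(1,3)] that(2) by blast
  show "\<exists>u\<in>?C. E v u" if "v \<in> ?C" "seed_colouring v \<noteq> 0" for v
    using that val edge_sym by blast
qed blast

lemma seed_pinned:
  "pinned D {r, t} ({r, t} \<union> nbhd r \<union> nbhd t) ({r, t} \<union> nbhd r \<union> nbhd t) seed_colouring"
  unfolding pinned_def
proof (intro allI impI)
  let ?C = "{r, t} \<union> nbhd r \<union> nbhd t"
  fix \<psi> assume "(\<forall>v\<in>?C. \<psi> v = seed_colouring v) \<and> admissible D {r, t} ?C \<psi>"
  then have agree: "\<And>v. v \<in> ?C \<Longrightarrow> \<psi> v = seed_colouring v" and adm: "admissible D {r, t} ?C \<psi>"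
    by blast+
  have val: "\<psi> r = 0" "\<psi> t = 0" "\<psi> s1 = 1" "\<psi> s2 = 1" "\<psi> w = 1"
    "\<And>a. a \<in> A \<Longrightarrow> \<psi> a = hA a" "\<And>b. b \<in> B \<Longrightarrow> \<psi> b = hB b"
    using agree seed_colouring_values by (auto simp: nbhd_r_eq nbhd_t_eq)
  have profiles: "\<psi> ` nbhd r = insert 1 (hA ` A)" "\<psi> ` nbhd t = insert 1 (hB ` B)"
    using val by (auto simp: nbhd_r_eq nbhd_t_eq)
  text \<open>Both roots have a repeated colour on their neighbourhood, and only the neighbourhood of \<open>t\<close>
    sees the colour \<open>m\<close>.\<close>
  have "\<not> inj_on \<psi> (nbhd r)"
    using inj_onD[of \<psi> "nbhd r" s1 s2] val(3,4) s1_ne_s2 r_s1 r_s2 by auto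
  moreover have "\<not> inj_on \<psi> (nbhd t)"
    using inj_onD[of \<psi> "nbhd t" s1 w] val(3,5) w_ne_s1 t_w edge_sym[OF s1_t] by auto
  ultimately have deficient: "\<not> {1..D} \<subseteq> \<psi> ` nbhd r" "\<not> {1..D} \<subseteq> \<psi> ` nbhd t"
    using not_all_colours_if_not_inj regular r_in_V t_in_V by auto
  have "m \<notin> \<psi> ` nbhd r" "m \<in> \<psi> ` nbhd t" using profiles m_notin_hA m_in_hB m_range by auto
  then have profiles_differ: "\<psi> ` nbhd r \<noteq> \<psi> ` nbhd t" by blast
  have r: "r \<in> forced_fixed \<psi>"
    by (rule forced_fixed_deficient_root[OF adm r_in_V val(1) deficient(1)]) (use profiles_differ in auto)
  have t: "t \<in> forced_fixed \<psi>"
    by (rule forced_fixed_deficient_root[OF adm t_in_V val(2) deficient(2)]) (use profiles_differ in auto)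
  have s1: "s1 \<in> forced_fixed \<psi>"
    using forced_fixed.two_fixed_nbrs[OF _ r t t_ne_r[symmetric] edge_sym[OF r_s1] s1_t] r_s1 edge_in_V
    by blast
  have "nbhd r - {s1} = insert s2 A" "nbhd t - {s1} = insert w B"
    using nbhd_r_eq nbhd_t_eq s1_ne_s2 w_ne_s1 outside_A_B by auto
  moreover have "inj_on \<psi> A" "inj_on \<psi> B"
    using inj_on_cong[of A \<psi> hA] inj_on_cong[of B \<psi> hB] val(6,7) hA_inj hB_inj by simp_all
  moreover have "\<psi> s2 \<notin> \<psi> ` A" "\<psi> w \<notin> \<psi> ` B" using val hA_range hB_range by fastforce+
  ultimately have "inj_on \<psi> (nbhd r - {s1})" "inj_on \<psi> (nbhd t - {s1})"
    using outside_A_B by simp_all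
  then have "nbhd r \<subseteq> forced_fixed \<psi>" "nbhd t \<subseteq> forced_fixed \<psi>"
    using nbhd_forced_fixed[of _ \<psi> "{s1}"] r t s1 by blast+
  then show "?C \<subseteq> forced_fixed \<psi>" using r t by blast
qed

end

context girth5_graph
begin

lemma exists_nbr_outside:
  assumes "v \<in> V" "card (nbhd v) = D" "finite X" "card X < D"
  shows "\<exists>x. E v x \<and> x \<notin> X"
proof -
  have "\<not> nbhd v \<subseteq> X"
  proof
    assume "nbhd v \<subseteq> X"
    then have "card (nbhd v) \<le> card X" using card_mono[OF assms(3)] by blast
    then show False using assms(2,4) by linarith
  qed
  then show ?thesis by blast
qed

lemma exists_regular_frame:
  assumes regular: "\<forall>v\<in>V. card (nbhd v) = D" and D: "3 \<le> D" and r: "r \<in> V"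
  obtains s1 s2 t w where "regular_frame V E D r s1 s2 t w"
proof -
  have nbr: "\<exists>x. E v x \<and> x \<notin> X" if "v \<in> V" "finite X" "card X < D" for v X
    using exists_nbr_outside that regular by blast
  obtain s1 where s1: "E r s1" using nbr[OF r, of "{}"] D by auto
  have "s1 \<in> V" using s1 edge_in_V by blast
  then obtain t where t: "E s1 t" "t \<noteq> r" using nbr[of s1 "{r}"] D by auto
  have "t \<in> V" using t edge_in_V by blast
  then obtain w where w: "E t w" "w \<noteq> s1" using nbr[of t "{s1}"] D by auto
  obtain a where a: "E r a" "a \<noteq> s1" using nbr[OF r, of "{s1}"] D by auto
  obtain s2 where s2: "E r s2" "s2 \<noteq> s1" "\<not> E s2 w"
  proof (cases "E a w")
    case True
    have "card {s1, a} < D" using D by (simp add: card_insert_if)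
    then obtain a' where a': "E r a'" "a' \<notin> {s1, a}" using nbr[OF r, of "{s1, a}"] by auto
    have "w \<noteq> r" using no_triangle[of r s1 t] s1 t w edge_sym by blast
    then have "\<not> E a' w"
      using common_nbrs_unique[of a' r w a] a a' True edge_sym by blast
    then show ?thesis using that a' by blast
  qed (use that a in blast)
  have "regular_frame V E D r s1 s2 t w"
    unfolding regular_frame_def regular_frame_axioms_def
    using girth5_graph_axioms regular D r s1 t w s2 by blast
  then show ?thesis using that by blast
qed

lemma regular_seed:
  assumes "\<forall>v\<in>V. card (nbhd v) = D" "3 \<le> D" "r \<in> V"
  shows "\<exists>R I C \<phi>. partial_colouring V E D R I C \<phi> \<and> pinned D R I C \<phi>"
proof -
  obtain s1 s2 t w where "regular_frame V E D r s1 s2 t w"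
    by (rule exists_regular_frame[OF assms])
  then interpret regular_frame V E D r s1 s2 t w .
  obtain hA hB m where "inj_on hA A" "hA ` A \<subseteq> {2..D}" "inj_on hB B" "hB ` B \<subseteq> {2..D}"
    "m \<in> {2..D}" "m \<notin> hA ` A" "m \<in> hB ` B"
    "\<And>a b. a \<in> A \<Longrightarrow> b \<in> B \<Longrightarrow> E a b \<Longrightarrow> hA a \<noteq> hB b"
    using exists_regular_colours by blast
  then interpret regular_colouring V E D r s1 s2 t w hA hB m
    by unfold_locales
  show ?thesis using seed_partial_colouring seed_pinned by blast
qed

lemma degree2_seed:
  assumes "connected_graph V E" "\<not> iso_to_cycle V E 6" "\<forall>v\<in>V. card (nbhd v) = 2" "r \<in> V"
  shows "\<exists>R I C \<phi>. partial_colouring V E 2 R I C \<phi> \<and> pinned 2 R I C \<phi>"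
proof -
  have deg2: "card (nbhd v) = 2" if "E u v" for u v using assms(3) edge_in_V that by blast
  obtain s1 s2 where r: "nbhd r = {s1, s2}" "s1 \<noteq> s2"
    using assms(3,4) by (auto simp: card_2_iff)
  then have "E r s1" "E r s2" "E s1 r" "E s2 r" using edge_sym by auto
  then obtain t w where s: "t \<noteq> r" "nbhd s1 = {r, t}" "w \<noteq> r" "nbhd s2 = {r, w}"
    using other_nbr[OF deg2[of r s1]] other_nbr[OF deg2[of r s2]] by metis
  then have "E s2 w" "E w s2" using edge_sym by auto
  then obtain w' where "w' \<noteq> s2" "nbhd w = {s2, w'}" using other_nbr[OF deg2[of s2 w]] by metis
  then interpret degree2_frame V E r s1 s2 t w w'
    using assms(4) r s by unfold_locales
  show ?thesis
    using iso_to_C6_if_closed[OF assms(1,3)] assms(2) path_partial_colouring path_pinned by blast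
qed

lemma exists_seed:
  assumes conn: "connected_graph V E" and not_C6: "\<not> iso_to_cycle V E 6"
    and deg: "\<forall>v\<in>V. card (nbhd v) \<le> D"
  shows "\<exists>R I C \<phi>. partial_colouring V E D R I C \<phi> \<and> pinned D R I C \<phi>"
proof (cases "\<exists>r\<in>V. card (nbhd r) < D \<or> V \<subseteq> insert r (nbhd r)")
  case True
  then obtain r where "r \<in> V" "card (nbhd r) < D \<or> V \<subseteq> insert r (nbhd r)" by blast
  then show ?thesis using star_seed deg by blast
next
  case False
  then have regular: "\<forall>v\<in>V. card (nbhd v) = D" using deg le_neq_implies_less by blast
  obtain r where r: "r \<in> V" using conn by (auto simp: connected_graph_def)
  consider "D \<le> 1" | "D = 2" | "3 \<le> D" by linarith
  then show ?thesis
  proof cases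
    case 1
    then have "V \<subseteq> insert r (nbhd r)" using star_if_max_degree_le_1[OF conn r] regular by simp
    then show ?thesis using False r by blast
  next
    case 2
    then show ?thesis using degree2_seed[OF conn not_C6 _ r] regular by blast
  qed (use regular_seed[OF regular _ r] in blast)
qed

end

theorem theorem1:
  fixes V :: "'a set" and E :: "'a \<Rightarrow> 'a \<Rightarrow> bool"
  assumes "simple_graph V E"
    and "connected_graph V E"
    and "girth_at_least V E 5"
    and "\<not> iso_to_cycle V E 6"
  shows "distinguishing_chromatic_number V E \<le> max_degree V E + 1"
proof -
  interpret girth5_graph V E using assms(1,3) by unfold_locales
  have deg: "\<forall>v\<in>V. card (nbhd v) \<le> max_degree V E" using card_nbhd_le_max_degree by blast
  obtain R I C \<phi> where "partial_colouring V E (max_degree V E) R I C \<phi>" "pinned (max_degree V E) R I C \<phi>"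
    using exists_seed[OF assms(2,4) deg] by blast
  then show ?thesis using distinguishing_chromatic_number_le_if_seed[OF assms(2) deg] by blast
qed

end
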